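(* There exists an algebraic structure $A$ with a single operation $f$ of countably infinite arity (i.e. $f:A^{\mathbb N}\to A$) such that the set of all non-generators of $A$ is not a substructure of $A$ (i.e. is not closed under $f$).
   Context: For an algebraic structure $A$ with operation $f:A^{\mathbb N}\to A$, a substructure is a subset closed under $f$. For $X\subseteq A$, $\langle X\rangle$ is the intersection of all substructures containing $X$, and $\langle X,a\rangle=\langle X\cup\{a\}\rangle$. An element $a\in A$ is a non-generator if for every $X\subseteq A$, $\langle X,a\rangle=A$ implies $\langle X\rangle=A$. *)

theory Defs
  imports Main
begin

definition is_structure :: "'a set \<Rightarrow> ((nat \<Rightarrow> 'a) \<Rightarrow> 'a) \<Rightarrow> bool" where
  "is_structure A f \<longleftrightarrow> (\<forall>s. (\<forall>n. s n \<in> A) \<longrightarrow> f s \<in> A)"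

definition substructure :: "'a set \<Rightarrow> ((nat \<Rightarrow> 'a) \<Rightarrow> 'a) \<Rightarrow> 'a set \<Rightarrow> bool" where
  "substructure A f S \<longleftrightarrow> S \<subseteq> A \<and> (\<forall>s. (\<forall>n. s n \<in> S) \<longrightarrow> f s \<in> S)"

definition generated :: "'a set \<Rightarrow> ((nat \<Rightarrow> 'a) \<Rightarrow> 'a) \<Rightarrow> 'a set \<Rightarrow> 'a set" where
  "generated A f X = \<Inter> {S. substructure A f S \<and> X \<subseteq> S}"

definition non_generator :: "'a set \<Rightarrow> ((nat \<Rightarrow> 'a) \<Rightarrow> 'a) \<Rightarrow> 'a \<Rightarrow> bool" where
  "non_generator A f a \<longleftrightarrow> a \<in> A \<and>
     (\<forall>X. X \<subseteq> A \<longrightarrow> generated A f (X \<union> {a}) = A \<longrightarrow> generated A f X = A)"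

end

theory Submission
  imports Defs
begin

text \<open>A sequence starting with
  \<open>{}, UNIV\<close> decodes an arbitrary subset from its tail, so \<open>{}\<close> together with \<open>UNIV\<close>
  generates everything, whereas \<open>{UNIV}\<close> is closed: \<open>{}\<close> is not a non-generator.
  A sequence containing infinitely many distinct singletons is sent to \<open>{}\<close>, any other
  sequence to its first entry. Adjoining one singleton \<open>{m}\<close> to a substructure missing it
  keeps it closed, because in a sequence with infinitely many singletons the occurrences
  of \<open>{m}\<close> may be replaced by another singleton of the sequence; hence every singleton
  is a non-generator. But the sequence of all singletons is sent to \<open>{}\<close>.\<close>

lemma subset_generated: "X \<subseteq> generated A f X"
  unfolding generated_def by auto

lemma generated_minimal: "substructure A f S \<Longrightarrow> X \<subseteq> S \<Longrightarrow> generated A f X \<subseteq> S"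
  unfolding generated_def by auto

lemma substructure_generated:
  assumes "is_structure A f" "X \<subseteq> A"
  shows "substructure A f (generated A f X)"
proof -
  have "substructure A f A"
    using assms(1) unfolding is_structure_def substructure_def by blast
  with assms(2) show ?thesis
    unfolding substructure_def generated_def by blast
qed

lemma non_generatorI:
  assumes A: "is_structure A f" and "a \<in> A"
    and insert_closed: "\<And>T. substructure A f T \<Longrightarrow> a \<notin> T \<Longrightarrow> substructure A f (insert a T)"
    and rest_generates: "generated A f (A - {a}) = A"
  shows "non_generator A f a"
  unfolding non_generator_def
proof (intro conjI allI impI)
  fix X assume "X \<subseteq> A" and gen: "generated A f (X \<union> {a}) = A"
  let ?T = "generated A f X"
  have T: "substructure A f ?T"
    using substructure_generated[OF A \<open>X \<subseteq> A\<close>] .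
  show "?T = A"
  proof (cases "a \<in> ?T")
    case True
    then have "X \<union> {a} \<subseteq> ?T" using subset_generated[of X A f] by blast
    then have "generated A f (X \<union> {a}) \<subseteq> ?T" by (rule generated_minimal[OF T])
    with gen have "A \<subseteq> ?T" by simp
    moreover have "?T \<subseteq> A" using T unfolding substructure_def by (rule conjunct1)
    ultimately show ?thesis by (rule subset_antisym[symmetric])
  next
    case False
    have "X \<union> {a} \<subseteq> insert a ?T" using subset_generated[of X A f] by blast
    then have "generated A f (X \<union> {a}) \<subseteq> insert a ?T"
      by (rule generated_minimal[OF insert_closed[OF T False]])
    with gen have "A - {a} \<subseteq> ?T" by blast
    then have "generated A f (A - {a}) \<subseteq> ?T" by (rule generated_minimal[OF T])
    with rest_generates have "a \<in> ?T" using \<open>a \<in> A\<close> by blast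
    with False show ?thesis by contradiction
  qed
qed (fact \<open>a \<in> A\<close>)

definition example_op :: "(nat \<Rightarrow> nat set) \<Rightarrow> nat set" where
  "example_op s =
     (if s 0 = {} \<and> s 1 = UNIV then {n. s (Suc (Suc n)) = UNIV}
      else if infinite {n. \<exists>k. s k = {n}} then {}
      else s 0)"

lemma singleton_neq_UNIV: "{m} \<noteq> (UNIV :: nat set)"
  by (metis Suc_n_not_n UNIV_I singletonD)

lemma example_op_substructure_eq_UNIV:
  assumes S: "substructure UNIV example_op S" and "{} \<in> S" "UNIV \<in> S"
  shows "S = UNIV"
proof -
  have "B \<in> S" for B
  proof -
    define s :: "nat \<Rightarrow> nat set" where "s n = (if n = 0 then {} else if n = 1 then UNIV
                           else if n - 2 \<in> B then UNIV else {})" for n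
    have "\<forall>n. s n \<in> S" using assms(2,3) unfolding s_def by auto
    with S have "example_op s \<in> S" unfolding substructure_def by blast
    moreover have "example_op s = B" unfolding example_op_def s_def by auto
    ultimately show ?thesis by simp
  qed
  then show ?thesis by auto
qed

lemma example_op_substructure_insert_singleton:
  assumes T: "substructure UNIV example_op T" and "{m} \<notin> T"
  shows "substructure UNIV example_op (insert {m} T)"
  unfolding substructure_def
proof (intro conjI allI impI)
  fix s :: "nat \<Rightarrow> nat set" assume s: "\<forall>k. s k \<in> insert {m} T"
  show "example_op s \<in> insert {m} T"
  proof (cases "s 0 = {} \<and> s 1 = UNIV")
    case True
    then have "{} \<in> T" "UNIV \<in> T"
      using s[rule_format, of 0] s[rule_format, of 1] singleton_neq_UNIV by auto
    with \<open>{m} \<notin> T\<close> show ?thesis using example_op_substructure_eq_UNIV[OF T] by blast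
  next
    case not_decode: False
    show ?thesis
    proof (cases "infinite {n. \<exists>k. s k = {n}}")
      case False
      with not_decode s show ?thesis unfolding example_op_def by auto
    next
      case True
      then have "infinite ({n. \<exists>k. s k = {n}} - {m})" by simp
      then obtain n where "n \<in> {n. \<exists>k. s k = {n}} - {m}"
        using infinite_imp_nonempty by blast
      then obtain k0 where "s k0 = {n}" and "n \<noteq> m" by blast
      then have "{n} \<in> T" using s[rule_format, of k0] by simp
      define t where "t k = (if s k = {m} then {n} else s k)" for k
      have "\<forall>k. t k \<in> T" using s \<open>{n} \<in> T\<close> unfolding t_def by auto
      with T have "example_op t \<in> T" unfolding substructure_def by blast
      have "{n. \<exists>k. s k = {n}} - {m} \<subseteq> {n. \<exists>k. t k = {n}}"
        unfolding t_def by auto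
      with \<open>infinite ({n. \<exists>k. s k = {n}} - {m})\<close>
      have infinite_t: "infinite {n. \<exists>k. t k = {n}}" using finite_subset by blast
      have not_decode_t: "\<not> (t 0 = {} \<and> t 1 = UNIV)"
        using not_decode singleton_neq_UNIV unfolding t_def by auto
      have "example_op t = {}"
        unfolding example_op_def if_not_P[OF not_decode_t] if_P[OF infinite_t] ..
      moreover have "example_op s = {}"
        unfolding example_op_def if_not_P[OF not_decode] if_P[OF True] ..
      ultimately show ?thesis using \<open>example_op t \<in> T\<close> by simp
    qed
  qed
qed blast

lemma is_structure_example_op: "is_structure UNIV example_op"
  unfolding is_structure_def by simp

lemma example_op_generated_eq_UNIV:
  assumes "{} \<in> X" "UNIV \<in> X"
  shows "generated UNIV example_op X = UNIV"
proof (rule example_op_substructure_eq_UNIV)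
  show "substructure UNIV example_op (generated UNIV example_op X)"
    using substructure_generated[OF is_structure_example_op subset_UNIV] .
  show "{} \<in> generated UNIV example_op X" "UNIV \<in> generated UNIV example_op X"
    using assms subset_generated[of X UNIV example_op] by auto
qed

lemma non_generator_singleton: "non_generator UNIV example_op {m}"
proof (rule non_generatorI[OF is_structure_example_op UNIV_I])
  show "substructure UNIV example_op (insert {m} T)"
    if "substructure UNIV example_op T" "{m} \<notin> T" for T
    using example_op_substructure_insert_singleton[OF that] .
  have "{} \<in> UNIV - {{m}}" "UNIV \<in> UNIV - {{m}}"
    using singleton_neq_UNIV[of m] by auto
  then show "generated UNIV example_op (UNIV - {{m}}) = UNIV"
    by (rule example_op_generated_eq_UNIV)
qed

lemma not_non_generator_empty: "\<not> non_generator UNIV example_op {}"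
proof
  assume "non_generator UNIV example_op {}"
  moreover have "generated UNIV example_op ({UNIV} \<union> {{}}) = UNIV"
    by (rule example_op_generated_eq_UNIV) simp_all
  ultimately have gen: "generated UNIV example_op {UNIV} = UNIV"
    unfolding non_generator_def by blast
  have "example_op s = UNIV" if "\<forall>k. s k = UNIV" for s
    using that unfolding example_op_def by (auto simp: singleton_neq_UNIV[symmetric])
  then have "substructure UNIV example_op {UNIV}"
    unfolding substructure_def by auto
  then have "generated UNIV example_op {UNIV} \<subseteq> {UNIV}"
    by (rule generated_minimal) simp
  with gen have "{} \<in> {UNIV :: nat set}" by blast
  then show False by simp
qed

lemma example_op_singletons: "example_op (\<lambda>n. {n}) = {}"
proof -
  have not_decode: "\<not> ({0} = {} \<and> {1} = (UNIV :: nat set))" by simp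
  have "{n. \<exists>k. {k} = {n::nat}} = UNIV" by blast
  then have "infinite {n. \<exists>k. {k} = {n::nat}}" by simp
  then show ?thesis unfolding example_op_def if_not_P[OF not_decode] by simp
qed

theorem corollary7:
  shows "\<exists>(A :: nat set set) (f :: (nat \<Rightarrow> nat set) \<Rightarrow> nat set).
           is_structure A f \<and> \<not> substructure A f {a. non_generator A f a}"
proof (intro exI conjI)
  show "is_structure UNIV example_op" by (rule is_structure_example_op)
  show "\<not> substructure UNIV example_op {a. non_generator UNIV example_op a}"
  proof
    assume "substructure UNIV example_op {a. non_generator UNIV example_op a}"
    then have closed: "\<forall>s. (\<forall>n. non_generator UNIV example_op (s n)) \<longrightarrow>
                 non_generator UNIV example_op (example_op s)"
      unfolding substructure_def by simp
    have "non_generator UNIV example_op (example_op (\<lambda>n. {n}))"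
      using closed[rule_format, of "\<lambda>n. {n}"] non_generator_singleton by simp
    then show False
      using not_non_generator_empty example_op_singletons by simp
  qed
qed

end
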